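(* Let $n \ge 2k + 1 \ge 5$ and let $Q$ be an independent set in $K(n,k)$. If we uniquely expand $$|Q| = \binom{q_{n-k}}{n-k} + \binom{q_{n-k-1}}{n-k-1} + \cdots + \binom{q_j}{j},$$ where $q_{n-k} > q_{n-k-1} > \ldots > q_j \ge j \ge 1$ are natural numbers, then $$|N(Q)| \ge \binom{q_{n-k}}{k} + \binom{q_{n-k-1}}{k-1} + \cdots + \binom{q_j}{j-(n-2k)}.$$
   Context: The Kneser graph $K(n,k)$ has as vertices the $k$-element subsets of $[n]=\{1,\dots,n\}$, two vertices being adjacent iff they are disjoint. For a set $Q$ of vertices of a graph, the neighborhood $N(Q)$ is the set of vertices not in $Q$ that are adjacent to at least one vertex of $Q$. In the bound, the $i$-th term is $\binom{q_i}{i-(n-2k)}$ for $i=n-k,n-k-1,\dots,j$; binomial coefficients with negative lower index are $0$. *)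

theory Defs
  imports Main
begin

definition kneser_V :: "nat \<Rightarrow> nat \<Rightarrow> nat set set" where
  "kneser_V n k = {A. A \<subseteq> {1..n} \<and> card A = k}"

definition kneser_adj :: "nat set \<Rightarrow> nat set \<Rightarrow> bool" where
  "kneser_adj A B \<longleftrightarrow> A \<inter> B = {}"

definition kneser_independent :: "nat \<Rightarrow> nat \<Rightarrow> nat set set \<Rightarrow> bool" where
  "kneser_independent n k Q \<longleftrightarrow>
     Q \<subseteq> kneser_V n k \<and> (\<forall>A\<in>Q. \<forall>B\<in>Q. A \<noteq> B \<longrightarrow> \<not> kneser_adj A B)"

definition kneser_nbhd :: "nat \<Rightarrow> nat \<Rightarrow> nat set set \<Rightarrow> nat set set" where
  "kneser_nbhd n k Q = {B \<in> kneser_V n k. B \<notin> Q \<and> (\<exists>A\<in>Q. kneser_adj A B)}"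

definition binom_z :: "nat \<Rightarrow> int \<Rightarrow> nat" where
  "binom_z m r = (if r < 0 then 0 else m choose (nat r))"

end

theory Submission
  imports Defs
begin

text \<open>Complementing the members of Q within {1..n} gives a family F of (n-k)-sets with |F| = |Q|.
  A k-subset of {1..n} - A is disjoint from A, so for k > 0 it is a vertex adjacent to A; it
  cannot lie in Q because Q is independent. Hence N(Q) contains the k-shadow of F, and n - 2k
  applications of the Kruskal--Katona theorem to the cascade expansion of |F| bound the size of
  this k-shadow from below by the stated sum.

  Kruskal--Katona is proved by compression (Frankl's argument): compressing towards an element e
  keeps the size and does not enlarge the shadow, so F may be assumed stable under replacing any
  element by e. Then the shadow of the members avoiding e lies in the link of e, which forces the
  link to be large, and the shadow of F contains both the link and, lifted by e, the shadow of the
  link; induction on the ground set applies to both.\<close>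

section \<open>Shadows and compressions\<close>

definition shadow :: "'a set set \<Rightarrow> 'a set set" where
  "shadow F = {A - {y} | A y. A \<in> F \<and> y \<in> A}"

lemma shadow_Pow: "F \<subseteq> Pow U \<Longrightarrow> shadow F \<subseteq> Pow U"
  unfolding shadow_def by blast

lemma finite_shadow: "finite U \<Longrightarrow> F \<subseteq> Pow U \<Longrightarrow> finite (shadow F)"
  by (meson finite_Pow_iff rev_finite_subset shadow_Pow)

lemma shadow_uniform:
  "finite U \<Longrightarrow> F \<subseteq> Pow U \<Longrightarrow> \<forall>A\<in>F. card A = m \<Longrightarrow> \<forall>B\<in>shadow F. card B = m - 1"
  unfolding shadow_def by (auto simp: finite_subset)

lemma card_le_card_shadow:
  assumes "finite U" "G \<subseteq> Pow U" "A \<in> G"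
  shows "card A \<le> card (shadow G)"
proof -
  have "(\<lambda>y. A - {y}) ` A \<subseteq> shadow G" using assms(3) unfolding shadow_def by blast
  moreover have "inj_on (\<lambda>y. A - {y}) A" by (rule inj_onI) blast
  ultimately show ?thesis
    using finite_shadow[OF assms(1,2)] by (metis card_image card_mono)
qed

definition compress_set :: "'a \<Rightarrow> 'a \<Rightarrow> 'a set \<Rightarrow> 'a set" where
  "compress_set e x A = (if x \<in> A \<and> e \<notin> A then insert e (A - {x}) else A)"

definition compress :: "'a \<Rightarrow> 'a \<Rightarrow> 'a set set \<Rightarrow> 'a set set" where
  "compress e x G = (\<lambda>A. if compress_set e x A \<in> G then A else compress_set e x A) ` G"

lemma mem_compress:
  assumes "x \<noteq> e"
  shows "B \<in> compress e x G \<longleftrightarrow> (B \<in> G \<and> compress_set e x B \<in> G) \<or>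
     (B \<notin> G \<and> e \<in> B \<and> x \<notin> B \<and> insert x (B - {e}) \<in> G)"
proof
  assume "B \<in> compress e x G"
  then obtain A where A: "A \<in> G" "B = (if compress_set e x A \<in> G then A else compress_set e x A)"
    unfolding compress_def by auto
  show "(B \<in> G \<and> compress_set e x B \<in> G) \<or> (B \<notin> G \<and> e \<in> B \<and> x \<notin> B \<and> insert x (B - {e}) \<in> G)"
  proof (cases "compress_set e x A \<in> G")
    case False
    with A have "x \<in> A" "e \<notin> A" "B = insert e (A - {x})"
      unfolding compress_set_def by (auto split: if_splits)
    with A False assms show ?thesis by (auto simp: compress_set_def insert_absorb)
  qed (use A in simp)
next
  assume "(B \<in> G \<and> compress_set e x B \<in> G) \<or> (B \<notin> G \<and> e \<in> B \<and> x \<notin> B \<and> insert x (B - {e}) \<in> G)"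
  then consider "B \<in> G" "compress_set e x B \<in> G"
    | "B \<notin> G" "e \<in> B" "x \<notin> B" "insert x (B - {e}) \<in> G" by blast
  then show "B \<in> compress e x G"
  proof cases
    case 1
    then show ?thesis unfolding compress_def by (auto intro: rev_image_eqI)
  next
    case 2
    then have "compress_set e x (insert x (B - {e})) = B"
      using assms by (auto simp: compress_set_def)
    with 2 show ?thesis unfolding compress_def by (auto intro!: rev_image_eqI)
  qed
qed

lemma card_compress_set: "card (compress_set e x A) = card A"
proof (cases "finite A \<and> x \<in> A \<and> e \<notin> A")
  case True
  then have "card (compress_set e x A) = Suc (card (A - {x}))"
    by (simp add: compress_set_def)
  also have "\<dots> = card A"
    using True by (intro card_Suc_Diff1) auto
  finally show ?thesis .
qed (auto simp: compress_set_def)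

lemma compress_uniform: "\<forall>A\<in>G. card A = m \<Longrightarrow> \<forall>B\<in>compress e x G. card B = m"
  unfolding compress_def by (auto simp: card_compress_set)

lemma compress_Pow: "G \<subseteq> Pow U \<Longrightarrow> e \<in> U \<Longrightarrow> compress e x G \<subseteq> Pow U"
  unfolding compress_def compress_set_def by auto

lemma card_compress:
  assumes "x \<noteq> e" "finite G"
  shows "card (compress e x G) = card G"
proof -
  have "inj_on (\<lambda>A. if compress_set e x A \<in> G then A else compress_set e x A) G"
  proof (rule inj_onI)
    fix A1 A2
    assume "A1 \<in> G" "A2 \<in> G" and
      eq: "(if compress_set e x A1 \<in> G then A1 else compress_set e x A1) =
           (if compress_set e x A2 \<in> G then A2 else compress_set e x A2)"
    have undo: "A = insert x (compress_set e x A - {e})"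
      if "A \<in> G" "compress_set e x A \<notin> G" for A
      using that assms(1) unfolding compress_set_def by (auto split: if_splits)
    show "A1 = A2"
      using eq undo[OF \<open>A1 \<in> G\<close>] undo[OF \<open>A2 \<in> G\<close>] \<open>A1 \<in> G\<close> \<open>A2 \<in> G\<close>
      by (auto split: if_splits)
  qed
  then show ?thesis unfolding compress_def by (rule card_image)
qed

lemma shadow_compress_subset:
  assumes "x \<noteq> e"
  shows "shadow (compress e x G) \<subseteq> compress e x (shadow G)"
proof
  fix B assume "B \<in> shadow (compress e x G)"
  then obtain C y where C: "C \<in> compress e x G" "y \<in> C" "B = C - {y}"
    unfolding shadow_def by auto
  from C(1) assms consider "C \<in> G" "compress_set e x C \<in> G"
    | "C \<notin> G" "e \<in> C" "x \<notin> C" "insert x (C - {e}) \<in> G"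
    by (auto simp: mem_compress)
  then show "B \<in> compress e x (shadow G)"
  proof cases
    case 1
    have "B \<in> shadow G" using 1 C unfolding shadow_def by auto
    moreover have "compress_set e x B \<in> shadow G"
    proof (cases "x \<in> B \<and> e \<notin> B")
      case moved: True
      show ?thesis
      proof (cases "e \<in> C")
        case False
        with moved C have "compress_set e x B = compress_set e x C - {y}" "y \<in> compress_set e x C"
          using assms by (auto simp: compress_set_def)
        with 1 show ?thesis unfolding shadow_def by blast
      next
        case True
        with moved C have "compress_set e x B = C - {x}" "x \<in> C"
          using assms by (auto simp: compress_set_def)
        with 1 show ?thesis unfolding shadow_def by blast
      qed
    qed (use \<open>B \<in> shadow G\<close> in \<open>auto simp: compress_set_def\<close>)
    ultimately show ?thesis using assms by (simp add: mem_compress)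
  next
    case 2
    show ?thesis
    proof (cases "y = e")
      case True
      with 2 C have "B = insert x (C - {e}) - {x}" "compress_set e x B = B"
        by (auto simp: compress_set_def)
      moreover from this(1) 2 have "B \<in> shadow G" unfolding shadow_def by blast
      ultimately show ?thesis using assms by (simp add: mem_compress)
    next
      case False
      with 2 C have "insert x (B - {e}) = insert x (C - {e}) - {y}" "y \<in> insert x (C - {e})"
        "e \<in> B" "x \<notin> B"
        by auto
      with 2 show ?thesis using assms unfolding shadow_def
        by (auto simp: mem_compress compress_set_def)
    qed
  qed
qed

lemma card_shadow_compress_le:
  assumes "x \<noteq> e" "finite U" "G \<subseteq> Pow U"
  shows "card (shadow (compress e x G)) \<le> card (shadow G)"
proof -
  have "finite (shadow G)" using finite_shadow[OF assms(2,3)] .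
  then have "card (shadow (compress e x G)) \<le> card (compress e x (shadow G))"
    by (intro card_mono shadow_compress_subset assms(1)) (simp add: compress_def)
  also have "\<dots> = card (shadow G)"
    using card_compress[OF assms(1) \<open>finite (shadow G)\<close>] .
  finally show ?thesis .
qed

lemma card_containing_less_compress:
  assumes "x \<noteq> e" "finite G" "A \<in> G" "x \<in> A" "e \<notin> A" "insert e (A - {x}) \<notin> G"
  shows "card {B \<in> G. e \<in> B} < card {B \<in> compress e x G. e \<in> B}"
proof (rule psubset_card_mono)
  show "finite {B \<in> compress e x G. e \<in> B}" using assms(2) unfolding compress_def by auto
  have "{B \<in> G. e \<in> B} \<subseteq> {B \<in> compress e x G. e \<in> B}"
    using assms(1) by (auto simp: mem_compress compress_set_def)
  moreover have "insert e (A - {x}) \<in> compress e x G"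
    using assms by (auto simp: mem_compress insert_absorb)
  ultimately show "{B \<in> G. e \<in> B} \<subset> {B \<in> compress e x G. e \<in> B}"
    using assms(6) by auto
qed

definition shift_stable :: "'a \<Rightarrow> 'a set set \<Rightarrow> bool" where
  "shift_stable e G \<longleftrightarrow> (\<forall>A\<in>G. \<forall>x\<in>A. e \<notin> A \<longrightarrow> insert e (A - {x}) \<in> G)"

lemma ex_shift_stable_family:
  assumes "finite U" "e \<in> U" "F \<subseteq> Pow U" "\<forall>A\<in>F. card A = m"
  obtains G where "G \<subseteq> Pow U" "\<forall>A\<in>G. card A = m" "card G = card F"
    "card (shadow G) \<le> card (shadow F)" "shift_stable e G"
proof -
  define P where "P G \<longleftrightarrow> G \<subseteq> Pow U \<and> (\<forall>A\<in>G. card A = m) \<and> card G = card F \<and>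
      card (shadow G) \<le> card (shadow F)" for G
  have fin: "finite G" if "P G" for G
    using that assms(1) unfolding P_def by (meson finite_Pow_iff rev_finite_subset)
  have "card {A \<in> G. e \<in> A} < card F + 1" if "P G" for G
    using that fin[OF that] card_mono[of G "{A \<in> G. e \<in> A}"] unfolding P_def by auto
  \<comment> \<open>take a family maximising the number of members containing e\<close>
  then obtain G where G: "P G" and max: "\<And>G'. P G' \<Longrightarrow> card {A \<in> G'. e \<in> A} \<le> card {A \<in> G. e \<in> A}"
    using ex_has_greatest_nat[of P F "\<lambda>G. card {A \<in> G. e \<in> A}" "card F + 1"] assms
    unfolding P_def by blast
  have "shift_stable e G"
    unfolding shift_stable_def
  proof (rule ccontr)
    assume "\<not> (\<forall>A\<in>G. \<forall>x\<in>A. e \<notin> A \<longrightarrow> insert e (A - {x}) \<in> G)"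
    then obtain A x where A: "A \<in> G" "x \<in> A" "e \<notin> A" "insert e (A - {x}) \<notin> G" by blast
    then have "x \<noteq> e" by auto
    have "P (compress e x G)"
      using G compress_uniform[of G m e x] compress_Pow[of G U e x] assms(1,2)
        card_compress[OF \<open>x \<noteq> e\<close> fin[OF G]] card_shadow_compress_le[OF \<open>x \<noteq> e\<close> assms(1), of G]
      unfolding P_def by auto
    with max card_containing_less_compress[OF \<open>x \<noteq> e\<close> fin[OF G] A] show False by fastforce
  qed
  with G show thesis using that unfolding P_def by blast
qed

definition link :: "'a \<Rightarrow> 'a set set \<Rightarrow> 'a set set" where
  "link e G = (\<lambda>A. A - {e}) ` {A \<in> G. e \<in> A}"

lemma link_Pow: "G \<subseteq> Pow U \<Longrightarrow> link e G \<subseteq> Pow (U - {e})"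
  unfolding link_def by auto

lemma link_uniform:
  "finite U \<Longrightarrow> G \<subseteq> Pow U \<Longrightarrow> \<forall>A\<in>G. card A = m \<Longrightarrow> \<forall>B\<in>link e G. card B = m - 1"
  unfolding link_def by (auto simp: card_Diff_singleton finite_subset)

lemma card_eq_card_deletion_plus_card_link:
  assumes "finite G"
  shows "card G = card {A \<in> G. e \<notin> A} + card (link e G)"
proof -
  have "inj_on (\<lambda>A. A - {e}) {A \<in> G. e \<in> A}"
    by (rule inj_onI) (metis (no_types, lifting) insert_Diff mem_Collect_eq)
  then have "card (link e G) = card {A \<in> G. e \<in> A}"
    unfolding link_def by (rule card_image)
  moreover have "card G = card {A \<in> G. e \<notin> A} + card {A \<in> G. e \<in> A}"
    using card_Un_disjoint[of "{A \<in> G. e \<notin> A}" "{A \<in> G. e \<in> A}"] assms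
    by (simp add: Un_def conj_disj_distribL[symmetric] Int_def)
  ultimately show ?thesis by simp
qed

lemma shadow_deletion_subset_link:
  assumes "shift_stable e G"
  shows "shadow {A \<in> G. e \<notin> A} \<subseteq> link e G"
proof
  fix B assume "B \<in> shadow {A \<in> G. e \<notin> A}"
  then obtain A y where "A \<in> G" "e \<notin> A" "y \<in> A" "B = A - {y}"
    unfolding shadow_def by auto
  with assms have "insert e (A - {y}) \<in> G" "B = insert e (A - {y}) - {e}"
    unfolding shift_stable_def by auto
  then show "B \<in> link e G" unfolding link_def by auto
qed

lemma card_link_plus_card_shadow_link_le:
  assumes "finite U" "G \<subseteq> Pow U"
  shows "card (link e G) + card (shadow (link e G)) \<le> card (shadow G)"
proof -
  have no_e: "e \<notin> B" if "B \<in> link e G \<union> shadow (link e G)" for B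
    using that unfolding link_def shadow_def by auto
  have "link e G \<subseteq> shadow G"
    unfolding link_def shadow_def by blast
  moreover have "insert e ` shadow (link e G) \<subseteq> shadow G"
  proof
    fix B assume "B \<in> insert e ` shadow (link e G)"
    then obtain A y where "A \<in> G" "e \<in> A" "y \<in> A" "y \<noteq> e" "B = insert e (A - {e} - {y})"
      unfolding shadow_def link_def by blast
    then have "A \<in> G" "y \<in> A" "B = A - {y}" by auto
    then show "B \<in> shadow G" unfolding shadow_def by blast
  qed
  ultimately have sub: "link e G \<union> insert e ` shadow (link e G) \<subseteq> shadow G" by blast
  have fin: "finite (shadow G)" using finite_shadow[OF assms] .
  have "inj_on (insert e) (shadow (link e G))"
    by (rule inj_onI) (metis Diff_insert_absorb UnI2 no_e)
  then have "card (link e G) + card (shadow (link e G)) =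
      card (link e G) + card (insert e ` shadow (link e G))"
    by (simp add: card_image)
  also have "\<dots> = card (link e G \<union> insert e ` shadow (link e G))"
    using sub fin no_e by (intro card_Un_disjoint[symmetric]) (auto intro: finite_subset)
  also have "\<dots> \<le> card (shadow G)"
    using sub fin by (rule card_mono[rotated])
  finally show ?thesis .
qed

section \<open>The Kruskal--Katona theorem\<close>

definition cascade :: "nat \<Rightarrow> nat \<Rightarrow> (nat \<Rightarrow> nat) \<Rightarrow> bool" where
  "cascade j m a \<longleftrightarrow> 1 \<le> j \<and> j \<le> m \<and> j \<le> a j \<and> (\<forall>i. j \<le> i \<and> i < m \<longrightarrow> a i < a (Suc i))"

lemma cascade_index_le:
  assumes "cascade j m a" "j \<le> i" "i \<le> m"
  shows "i \<le> a i"
  using assms(2,3)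
proof (induction i)
  case (Suc i)
  show ?case
  proof (cases "j = Suc i")
    case False
    with Suc assms(1) have "i \<le> a i" "a i < a (Suc i)" by (auto simp: cascade_def)
    then show ?thesis by simp
  qed (use assms(1) in \<open>simp add: cascade_def\<close>)
qed (use assms(1) in \<open>simp add: cascade_def\<close>)

lemma cascade_tail:
  assumes "cascade j m a" "2 \<le> m" "c \<le> 1"
  shows "cascade (max j 2 - 1) (m - 1) (\<lambda>i. a (Suc i) - c)"
proof -
  have "max j 2 \<le> a (max j 2)"
    using assms(1,2) by (intro cascade_index_le[OF assms(1)]) (auto simp: cascade_def)
  moreover have "a (Suc i) - c < a (Suc (Suc i)) - c" if "max j 2 - 1 \<le> i" "i < m - 1" for i
  proof -
    have "j \<le> Suc i" "Suc i < m" using that by auto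
    then have "Suc i \<le> a (Suc i)" "a (Suc i) < a (Suc (Suc i))"
      using assms(1) cascade_index_le[OF assms(1)] unfolding cascade_def by auto
    with assms(3) show ?thesis by linarith
  qed
  ultimately show ?thesis
    using assms unfolding cascade_def by (auto simp: Suc_diff_le)
qed

lemma sum_from_max2:
  fixes g :: "nat \<Rightarrow> 'a::comm_monoid_add"
  assumes "1 \<le> j" "g 1 = 0"
  shows "(\<Sum>i=j..m. g i) = (\<Sum>i=max j 2..m. g i)"
proof (cases "j = 1 \<and> 1 \<le> m")
  case True
  then show ?thesis
    using assms(2) sum.atLeast_Suc_atMost[of 1 m g] by (simp add: max_def numeral_2_eq_2)
qed (use assms(1) in \<open>auto simp: max_def intro: sum.cong\<close>)

lemma sum_from_max2_shift:
  assumes "1 \<le> m"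
  shows "(\<Sum>i=max j 2 - 1..m - 1. g (Suc i)) = (\<Sum>i=max j 2..m. g i)"
  using sum.shift_bounds_cl_Suc_ivl[of g "max j 2 - 1" "m - 1"] assms
  by (simp add: Suc_diff_le)

lemma sum_choose_shift_le:
  assumes "1 \<le> m"
  shows "(\<Sum>i=max j 2 - 1..m - 1. f (Suc i) choose i) \<le> (\<Sum>i=j..m. f i choose (i - 1))"
proof -
  have "(\<Sum>i=max j 2 - 1..m - 1. f (Suc i) choose i) = (\<Sum>i=max j 2..m. f i choose (i - 1))"
    using sum_from_max2_shift[where g = "\<lambda>i. f i choose (i - 1)"] assms by simp
  also have "\<dots> \<le> (\<Sum>i=j..m. f i choose (i - 1))"
    by (rule sum_mono2) auto
  finally show ?thesis .
qed

lemma cascade_sum_pascal: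
  assumes "cascade j m a"
  shows "(\<Sum>i=j..m. a i choose i) =
    (\<Sum>i=j..m. (a i - 1) choose i) + (\<Sum>i=j..m. (a i - 1) choose (i - 1))"
proof -
  have "a i choose i = ((a i - 1) choose i) + ((a i - 1) choose (i - 1))" if "i \<in> {j..m}" for i
  proof -
    have "0 < i" "0 < a i"
      using that assms cascade_index_le[OF assms] unfolding cascade_def by fastforce+
    with choose_reduce_nat[of "a i" i] show ?thesis by linarith
  qed
  then show ?thesis by (simp add: sum.distrib)
qed

lemma cascade_shadow_sum_pascal:
  assumes "cascade j m a"
  shows "(\<Sum>i=j..m. a i choose (i - 1)) =
    (\<Sum>i=j..m. (a i - 1) choose (i - 1)) + (\<Sum>i=max j 2..m. (a i - 1) choose (i - 2))"
proof -
  define g where "g i = (if i = 1 then 0 else (a i - 1) choose (i - 2))" for i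
  have "a i choose (i - 1) = ((a i - 1) choose (i - 1)) + g i" if "i \<in> {j..m}" for i
  proof (cases "i = 1")
    case False
    have "0 < i - 1" "0 < a i"
      using that False assms cascade_index_le[OF assms] unfolding cascade_def by fastforce+
    with False choose_reduce_nat[of "a i" "i - 1"] show ?thesis
      unfolding g_def by (simp add: numeral_2_eq_2)
  qed (simp add: g_def)
  then have "(\<Sum>i=j..m. a i choose (i - 1)) = (\<Sum>i=j..m. (a i - 1) choose (i - 1)) + (\<Sum>i=j..m. g i)"
    by (simp add: sum.distrib)
  also have "(\<Sum>i=j..m. g i) = (\<Sum>i=max j 2..m. (a i - 1) choose (i - 2))"
    using assms unfolding cascade_def
    by (subst sum_from_max2) (auto simp: g_def intro: sum.cong)
  finally show ?thesis .
qed

definition kruskal_katona_bound :: "nat \<Rightarrow> 'a set set \<Rightarrow> bool" where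
  "kruskal_katona_bound m G \<longleftrightarrow> (\<forall>j a. cascade j m a \<longrightarrow> (\<Sum>i=j..m. a i choose i) \<le> card G \<longrightarrow>
     (\<Sum>i=j..m. a i choose (i - 1)) \<le> card (shadow G))"

text \<open>A strict inequality allows the lowest coefficient to drop to j - 1, which is how the
  coefficients a i - 1 in card_link_ge may end; the extra j - 1 on the right is the slack the
  induction over m - j needs.\<close>
lemma card_shadow_ge_if_card_gt:
  assumes kk: "kruskal_katona_bound m G"
    and "finite U" "G \<subseteq> Pow U" "\<forall>A\<in>G. card A = m"
  shows "1 \<le> j \<Longrightarrow> j \<le> m \<Longrightarrow> \<forall>i. j \<le> i \<and> i < m \<longrightarrow> b i < b (Suc i) \<Longrightarrow> j - 1 \<le> b j \<Longrightarrow>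
    (\<Sum>i=j..m. b i choose i) < card G \<Longrightarrow> (\<Sum>i=j..m. b i choose (i - 1)) + (j - 1) \<le> card (shadow G)"
proof (induction "m - j" arbitrary: j rule: less_induct)
  case less
  have split: "(\<Sum>i=j..m. f i) = f j + (\<Sum>i=Suc j..m. f i)" for f :: "nat \<Rightarrow> nat"
    using less.prems(2) by (rule sum.atLeast_Suc_atMost)
  consider "j \<le> b j" "j = 1" | "j \<le> b j" "j \<noteq> 1" | "b j = j - 1" "j = m" | "b j = j - 1" "j < m"
    using less.prems(2,4) by linarith
  then show ?case
  proof cases
    case 1
    then show ?thesis using kk less.prems unfolding kruskal_katona_bound_def cascade_def by simp
  next
    case 2
    define c where "c = b(j - 1 := j - 1)"
    have "Suc (j - 1) = j" using 2 less.prems(1) by simp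
    then have shift: "(\<Sum>i=j-1..m. f i) = f (j - 1) + (\<Sum>i=j..m. f i)" for f :: "nat \<Rightarrow> nat"
      using sum.atLeast_Suc_atMost[of "j - 1" m f] less.prems(2) by simp
    have agree: "c i = b i" if "i \<in> {j..m}" for i
      using that less.prems(1) unfolding c_def by auto
    have "c (j - 1) = j - 1" unfolding c_def by simp
    have "j - 1 choose (j - 1 - 1) = j - 1"
      using binomial_symmetric[of 1 "j - 1"] 2 less.prems(1) by simp
    then have "(\<Sum>i=j-1..m. c i choose i) = 1 + (\<Sum>i=j..m. b i choose i)"
      "(\<Sum>i=j-1..m. c i choose (i - 1)) = (j - 1) + (\<Sum>i=j..m. b i choose (i - 1))"
      unfolding shift using \<open>c (j - 1) = j - 1\<close> by (simp_all add: agree)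
    moreover have "cascade (j - 1) m c"
      using 2 less.prems(1-3) unfolding cascade_def c_def by (auto simp: le_Suc_eq)
    ultimately show ?thesis
      using kk less.prems(5) unfolding kruskal_katona_bound_def by fastforce
  next
    case 3
    obtain A where "A \<in> G" using less.prems(5) by fastforce
    with card_le_card_shadow[OF assms(2,3)] assms(4) have "m \<le> card (shadow G)" by fastforce
    with 3 less.prems(1) show ?thesis by simp
  next
    case 4
    have "(\<Sum>i=Suc j..m. b i choose (i - 1)) + (Suc j - 1) \<le> card (shadow G)"
      using 4 less.prems by (intro less.hyps) (auto simp: split)
    with 4 less.prems(1) show ?thesis by (simp add: split)
  qed
qed

lemma card_link_ge:
  assumes "finite U" "G \<subseteq> Pow U" "\<forall>A\<in>G. card A = m" "shift_stable e G"
    and kk: "kruskal_katona_bound m {A \<in> G. e \<notin> A}"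
    and cas: "cascade j m a" and card_G: "(\<Sum>i=j..m. a i choose i) \<le> card G"
  shows "(\<Sum>i=j..m. (a i - 1) choose (i - 1)) \<le> card (link e G)"
proof (rule ccontr)
  let ?D = "{A \<in> G. e \<notin> A}"
  have "finite G" using assms(1,2) by (meson finite_Pow_iff rev_finite_subset)
  assume small: "\<not> (\<Sum>i=j..m. (a i - 1) choose (i - 1)) \<le> card (link e G)"
  then have "(\<Sum>i=j..m. (a i - 1) choose i) < card ?D"
    using card_eq_card_deletion_plus_card_link[OF \<open>finite G\<close>, of e] cascade_sum_pascal[OF cas] card_G
    by linarith
  moreover have "\<forall>i. j \<le> i \<and> i < m \<longrightarrow> a i - 1 < a (Suc i) - 1"
    using cas cascade_index_le[OF cas] unfolding cascade_def
    by (metis diff_less_mono le_trans less_imp_le_nat)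
  ultimately have "(\<Sum>i=j..m. (a i - 1) choose (i - 1)) + (j - 1) \<le> card (shadow ?D)"
    using cas assms(2,3) unfolding cascade_def
    by (intro card_shadow_ge_if_card_gt[OF kk assms(1)]) auto
  moreover have "card (shadow ?D) \<le> card (link e G)"
    using shadow_deletion_subset_link[OF assms(4)] \<open>finite G\<close>
    unfolding link_def by (intro card_mono) auto
  ultimately show False using small by linarith
qed

lemma card_shadow_ge_cascade_tail:
  assumes kk: "kruskal_katona_bound (m - 1) L" and cas: "cascade j m a"
    and card_L: "(\<Sum>i=j..m. (a i - 1) choose (i - 1)) \<le> card L"
  shows "(\<Sum>i=max j 2..m. (a i - 1) choose (i - 2)) \<le> card (shadow L)"
proof (cases "2 \<le> m")
  case True
  have "(\<Sum>i=max j 2 - 1..m - 1. (a (Suc i) - 1) choose (i - 1)) \<le> card (shadow L)"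
    using kk cascade_tail[OF cas True, of 1] le_trans[OF sum_choose_shift_le card_L] True
    unfolding kruskal_katona_bound_def by simp
  then show ?thesis
    using sum_from_max2_shift[where g = "\<lambda>i. (a i - 1) choose (i - 2)"] True by simp
qed simp

lemma kruskal_katona_bound_if_shift_stable:
  assumes "finite U" "G \<subseteq> Pow U" "\<forall>A\<in>G. card A = m" "shift_stable e G"
    and "kruskal_katona_bound m {A \<in> G. e \<notin> A}" "kruskal_katona_bound (m - 1) (link e G)"
  shows "kruskal_katona_bound m G"
  unfolding kruskal_katona_bound_def
proof (intro allI impI)
  fix j a assume cas: "cascade j m a" and card_G: "(\<Sum>i=j..m. a i choose i) \<le> card G"
  have link: "(\<Sum>i=j..m. (a i - 1) choose (i - 1)) \<le> card (link e G)"
    by (rule card_link_ge[OF assms(1-5) cas card_G])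
  have "(\<Sum>i=j..m. a i choose (i - 1)) =
      (\<Sum>i=j..m. (a i - 1) choose (i - 1)) + (\<Sum>i=max j 2..m. (a i - 1) choose (i - 2))"
    by (rule cascade_shadow_sum_pascal[OF cas])
  also have "\<dots> \<le> card (link e G) + card (shadow (link e G))"
    using link card_shadow_ge_cascade_tail[OF assms(6) cas link] by (rule add_mono)
  also have "\<dots> \<le> card (shadow G)"
    by (rule card_link_plus_card_shadow_link_le[OF assms(1,2)])
  finally show "(\<Sum>i=j..m. a i choose (i - 1)) \<le> card (shadow G)" .
qed

theorem kruskal_katona:
  assumes "finite U" "F \<subseteq> Pow U" "\<forall>A\<in>F. card A = m"
  shows "kruskal_katona_bound m F"
  using assms
proof (induction "card U" arbitrary: U F m rule: less_induct)
  case less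
  show ?case
    unfolding kruskal_katona_bound_def
  proof (intro allI impI)
    fix j a assume cas: "cascade j m a" and card_F: "(\<Sum>i=j..m. a i choose i) \<le> card F"
    have "1 \<le> a m choose m"
      using cascade_index_le[OF cas, of m] cas by (simp add: cascade_def Suc_le_eq)
    also have "\<dots> \<le> (\<Sum>i=j..m. a i choose i)"
      using cas by (intro member_le_sum) (auto simp: cascade_def)
    finally have "0 < card F" using card_F by linarith
    then obtain A where "A \<in> F" by (auto simp: card_gt_0_iff)
    moreover have "A \<noteq> {}" using calculation less.prems(3) cas by (auto simp: cascade_def)
    ultimately obtain e where "e \<in> U" using less.prems(2) by blast
    then obtain G where G: "G \<subseteq> Pow U" "\<forall>A\<in>G. card A = m" "card G = card F"
      "card (shadow G) \<le> card (shadow F)" "shift_stable e G"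
      using ex_shift_stable_family[OF less.prems(1) _ less.prems(2,3)] by blast
    have smaller: "card (U - {e}) < card U" using card_Diff1_less[OF less.prems(1) \<open>e \<in> U\<close>] .
    have "kruskal_katona_bound m {A \<in> G. e \<notin> A}"
      using G(1,2) less.prems(1) by (intro less.hyps[OF smaller]) auto
    moreover have "kruskal_katona_bound (m - 1) (link e G)"
      using link_Pow[OF G(1)] link_uniform[OF less.prems(1) G(1,2)] less.prems(1)
      by (intro less.hyps[OF smaller]) auto
    ultimately have "kruskal_katona_bound m G"
      using kruskal_katona_bound_if_shift_stable[OF less.prems(1) G(1,2,5)] by blast
    with cas card_F G(3,4) show "(\<Sum>i=j..m. a i choose (i - 1)) \<le> card (shadow F)"
      unfolding kruskal_katona_bound_def by fastforce
  qed
qed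

section \<open>Iterated shadows and neighbourhoods in Kneser graphs\<close>

definition level_shadow :: "nat \<Rightarrow> 'a set set \<Rightarrow> 'a set set" where
  "level_shadow l F = {B. card B = l \<and> (\<exists>A\<in>F. B \<subseteq> A)}"

lemma level_shadow_self:
  assumes "finite U" "F \<subseteq> Pow U" "\<forall>A\<in>F. card A = m"
  shows "level_shadow m F = F"
proof
  show "level_shadow m F \<subseteq> F"
  proof
    fix B assume "B \<in> level_shadow m F"
    then obtain A where "A \<in> F" "B \<subseteq> A" "card B = m" unfolding level_shadow_def by auto
    moreover have "finite A" using \<open>A \<in> F\<close> assms(1,2) by (auto intro: finite_subset)
    ultimately show "B \<in> F" using assms(3) by (metis card_subset_eq)
  qed
  show "F \<subseteq> level_shadow m F" using assms(3) unfolding level_shadow_def by auto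
qed

lemma level_shadow_shadow:
  assumes "finite U" "F \<subseteq> Pow U" "\<forall>A\<in>F. card A = m" "l < m"
  shows "level_shadow l (shadow F) = level_shadow l F"
proof
  show "level_shadow l (shadow F) \<subseteq> level_shadow l F"
    unfolding level_shadow_def shadow_def by blast
  show "level_shadow l F \<subseteq> level_shadow l (shadow F)"
  proof
    fix B assume "B \<in> level_shadow l F"
    then obtain A where A: "A \<in> F" "B \<subseteq> A" "card B = l" unfolding level_shadow_def by auto
    with assms have "B \<noteq> A" by auto
    with A obtain y where "y \<in> A" "B \<subseteq> A - {y}" by blast
    with A show "B \<in> level_shadow l (shadow F)" unfolding level_shadow_def shadow_def by blast
  qed
qed

lemma sum_binom_z_shift:
  assumes "cascade j m a" "2 \<le> m" "1 \<le> d"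
  shows "(\<Sum>i=max j 2 - 1..m - 1. binom_z (a (Suc i)) (int i - int d))
    = (\<Sum>i=j..m. binom_z (a i) (int i - int (Suc d)))"
proof -
  have "(\<Sum>i=max j 2 - 1..m - 1. binom_z (a (Suc i)) (int i - int d))
      = (\<Sum>i=max j 2..m. binom_z (a i) (int i - int (Suc d)))"
    using sum_from_max2_shift[where g = "\<lambda>i. binom_z (a i) (int i - int (Suc d))"] assms(2)
    by simp
  also have "\<dots> = (\<Sum>i=j..m. binom_z (a i) (int i - int (Suc d)))"
    using assms by (intro sum_from_max2[symmetric]) (auto simp: cascade_def binom_z_def)
  finally show ?thesis .
qed

theorem card_level_shadow_ge:
  assumes "finite U" "F \<subseteq> Pow U" "\<forall>A\<in>F. card A = m"
    and "cascade j m a" "(\<Sum>i=j..m. a i choose i) \<le> card F" "d \<le> m"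
  shows "(\<Sum>i=j..m. binom_z (a i) (int i - int d)) \<le> card (level_shadow (m - d) F)"
  using assms
proof (induction d arbitrary: F m j a)
  case 0
  then show ?case using level_shadow_self[of U F m] by (simp add: binom_z_def)
next
  case (Suc d)
  note cas = Suc.prems(4)
  have kk: "(\<Sum>i=j..m. a i choose (i - 1)) \<le> card (shadow F)"
    using kruskal_katona[OF Suc.prems(1-3)] cas Suc.prems(5)
    unfolding kruskal_katona_bound_def by blast
  have level: "level_shadow (m - Suc d) F = level_shadow (m - 1 - d) (shadow F)"
    using level_shadow_shadow[OF Suc.prems(1-3), of "m - Suc d"] Suc.prems(6) by simp
  have shadow_F: "shadow F \<subseteq> Pow U" "\<forall>B\<in>shadow F. card B = m - 1"
    using shadow_Pow[OF Suc.prems(2)] shadow_uniform[OF Suc.prems(1-3)] by auto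
  show ?case
  proof (cases d)
    case 0
    have "(\<Sum>i=j..m. binom_z (a i) (int i - int (Suc d))) = (\<Sum>i=j..m. a i choose (i - 1))"
      using 0 cas unfolding cascade_def by (intro sum.cong) (auto simp: binom_z_def nat_diff_distrib)
    with kk level level_shadow_self[OF Suc.prems(1) shadow_F] 0 show ?thesis by simp
  next
    case (Suc d')
    with Suc.prems(6) have "2 \<le> m" "1 \<le> d" by simp_all
    have "(\<Sum>i=max j 2 - 1..m - 1. binom_z (a (Suc i)) (int i - int d))
        \<le> card (level_shadow (m - 1 - d) (shadow F))"
      using cascade_tail[OF cas \<open>2 \<le> m\<close>, of 0] le_trans[OF sum_choose_shift_le kk] Suc.prems(6)
      by (intro Suc.IH[OF Suc.prems(1) shadow_F]) simp_all
    then show ?thesis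
      using level sum_binom_z_shift[OF cas \<open>2 \<le> m\<close> \<open>1 \<le> d\<close>] by simp
  qed
qed

lemma level_shadow_complements_subset_kneser_nbhd:
  assumes "kneser_independent n k Q" "0 < k"
  shows "level_shadow k ((\<lambda>A. {1..n} - A) ` Q) \<subseteq> kneser_nbhd n k Q"
proof
  fix B assume "B \<in> level_shadow k ((\<lambda>A. {1..n} - A) ` Q)"
  then obtain A where A: "A \<in> Q" "B \<subseteq> {1..n} - A" "card B = k"
    unfolding level_shadow_def by auto
  then have "kneser_adj A B" unfolding kneser_adj_def by blast
  have "B \<noteq> {}" using A(3) assms(2) by (metis card.empty less_irrefl)
  with A(2) have "A \<noteq> B" by blast
  with A(1) \<open>kneser_adj A B\<close> assms(1) have "B \<notin> Q"
    unfolding kneser_independent_def by blast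
  moreover have "B \<in> kneser_V n k" using A(2,3) unfolding kneser_V_def by blast
  ultimately show "B \<in> kneser_nbhd n k Q"
    using A(1) \<open>kneser_adj A B\<close> unfolding kneser_nbhd_def by blast
qed

theorem lemma2p9:
  fixes n k j :: nat and Q :: "nat set set" and q :: "nat \<Rightarrow> nat"
  assumes "2 * k + 1 \<le> n" and "5 \<le> 2 * k + 1"
    and "kneser_independent n k Q"
    and "1 \<le> j" and "j \<le> n - k"
    and "\<forall>i. j \<le> i \<and> i < n - k \<longrightarrow> q i < q (Suc i)"
    and "j \<le> q j"
    and "card Q = (\<Sum>i = j..n - k. q i choose i)"
  shows "card (kneser_nbhd n k Q) \<ge>
           (\<Sum>i = j..n - k. binom_z (q i) (int i - (int n - 2 * int k)))"
proof -
  define F where "F = (\<lambda>A. {1..n} - A) ` Q"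
  have Q: "\<forall>A\<in>Q. A \<subseteq> {1..n} \<and> card A = k"
    using assms(3) unfolding kneser_independent_def kneser_V_def by auto
  have "inj_on (\<lambda>A. {1..n} - A) Q"
    by (rule inj_onI) (metis Q double_diff order_refl)
  then have "card F = card Q" unfolding F_def by (rule card_image)
  moreover have "F \<subseteq> Pow {1..n}" "\<forall>A\<in>F. card A = n - k"
    unfolding F_def using Q by (auto simp: card_Diff_subset finite_subset)
  moreover have "cascade j (n - k) q" using assms(4-7) unfolding cascade_def by blast
  ultimately have "(\<Sum>i=j..n-k. binom_z (q i) (int i - int (n - 2 * k))) \<le> card (level_shadow k F)"
    using card_level_shadow_ge[of "{1..n}" F "n - k" j q "n - 2 * k"] assms(1,8) by simp
  also have "\<dots> \<le> card (kneser_nbhd n k Q)"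
    using level_shadow_complements_subset_kneser_nbhd[OF assms(3)] assms(2)
    unfolding F_def by (intro card_mono) (auto simp: kneser_nbhd_def kneser_V_def)
  finally have "(\<Sum>i=j..n-k. binom_z (q i) (int i - int (n - 2 * k))) \<le> card (kneser_nbhd n k Q)" .
  moreover have "int (n - 2 * k) = int n - 2 * int k" using assms(1) by simp
  ultimately show ?thesis by simp
qed

end
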